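(* Let $G=(V,E)$ be a tree on a non-empty finite vertex set $V$, and let $\{A_v\}_{v\in V}$ be events in a probability space. Then \[ \Pr\Big(\bigcup_{v\in V} A_v\Big) \;\ge\; \frac{1}{\alpha(G)}\Big(\sum_{v\in V}\Pr(A_v) - \sum_{\{v,w\}\in E}\Pr(A_v\cap A_w)\Big). \]
   Context: $\alpha(G)$ denotes the independence number of $G$ (maximum size of a set of pairwise non-adjacent vertices). *)

theory Defs
  imports "HOL-Probability.Probability"
begin

definition simple_graph :: "'a set \<Rightarrow> 'a set set \<Rightarrow> bool" where
  "simple_graph V E \<longleftrightarrow> (\<forall>e\<in>E. \<exists>u v. e = {u, v} \<and> u \<noteq> v \<and> u \<in> V \<and> v \<in> V)"

definition walk :: "'a set set \<Rightarrow> 'a list \<Rightarrow> bool" where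
  "walk E xs \<longleftrightarrow> xs \<noteq> [] \<and> (\<forall>i < length xs - 1. {xs ! i, xs ! (i + 1)} \<in> E)"

definition graph_connected :: "'a set \<Rightarrow> 'a set set \<Rightarrow> bool" where
  "graph_connected V E \<longleftrightarrow>
     (\<forall>u\<in>V. \<forall>v\<in>V. \<exists>xs. walk E xs \<and> hd xs = u \<and> last xs = v)"

definition is_cycle :: "'a set set \<Rightarrow> 'a list \<Rightarrow> bool" where
  "is_cycle E xs \<longleftrightarrow> length xs \<ge> 3 \<and> distinct xs \<and> walk E xs \<and> {last xs, hd xs} \<in> E"

definition is_tree :: "'a set \<Rightarrow> 'a set set \<Rightarrow> bool" where
  "is_tree V E \<longleftrightarrow> simple_graph V E \<and> graph_connected V E \<and> \<not> (\<exists>xs. is_cycle E xs)"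

definition independent_set :: "'a set \<Rightarrow> 'a set set \<Rightarrow> 'a set \<Rightarrow> bool" where
  "independent_set V E S \<longleftrightarrow> S \<subseteq> V \<and> (\<forall>u\<in>S. \<forall>v\<in>S. {u, v} \<notin> E)"

definition independence_number :: "'a set \<Rightarrow> 'a set set \<Rightarrow> nat" where
  "independence_number V E = Max {card S | S. independent_set V E S}"

end

theory Submission
  imports Defs
begin

(* For an outcome \<omega> let S(\<omega>) = {v \<in> V. \<omega> \<in> A v} be the set of events that occur.
   The left-hand sum minus the edge sum is the expectation of |S(\<omega>)| - e(S(\<omega>)), where
   e(S) counts the edges inside S.  A greedy argument shows that every vertex set S contains
   an independent set of size at least |S| - e(S); hence |S| - e(S) \<le> \<alpha>(G) whenever
   S \<noteq> {}, and |S| - e(S) \<le> 0 otherwise, i.e. pointwise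
        |S(\<omega>)| - e(S(\<omega>)) \<le> \<alpha>(G) \<cdot> 1[\<omega> \<in> \<Union>A].
   Taking expectations gives \<alpha>(G) Pr(\<Union>A) \<ge> \<Sigma> Pr(A v) - \<Sigma> Pr(A v \<inter> A w).
   The argument works for every finite simple graph. *)

lemma simple_graph_edge:
  assumes "simple_graph V E" "e \<in> E"
  shows "e \<noteq> {} \<and> e \<subseteq> V"
  using assms unfolding simple_graph_def by auto

lemma simple_graph_no_loop:
  assumes "simple_graph V E"
  shows "{v} \<notin> E"
proof
  assume "{v} \<in> E"
  then obtain a b where "{v} = {a, b}" "a \<noteq> b"
    using assms unfolding simple_graph_def by blast
  then show False by auto
qed

text \<open>Adding a vertex either creates a new
  inner edge, or the vertex can be added to the independent set.\<close>

lemma independent_subset_greedy: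
  assumes "finite S" "S \<subseteq> V"
  shows "\<exists>I. independent_set V E I \<and> I \<subseteq> S \<and> card S \<le> card I + card {e\<in>E. e \<subseteq> S}"
  using assms
proof (induction S rule: finite_induct)
  case empty
  show ?case by (intro exI[of _ "{}"]) (simp add: independent_set_def)
next
  case (insert x F)
  obtain I where I: "independent_set V E I" "I \<subseteq> F" "card F \<le> card I + card {e\<in>E. e \<subseteq> F}"
    using insert.IH insert.prems by auto
  define D where "D = {e\<in>E. e \<subseteq> insert x F \<and> x \<in> e}"
  have "{e\<in>E. e \<subseteq> F} \<subseteq> Pow (insert x F)" "D \<subseteq> Pow (insert x F)"
    unfolding D_def by auto
  then have fin_inner: "finite {e\<in>E. e \<subseteq> F}" "finite D"
    using insert.hyps(1) by (meson finite_Pow_iff finite_insert finite_subset)+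
  have "{e\<in>E. e \<subseteq> insert x F} = {e\<in>E. e \<subseteq> F} \<union> D" "{e\<in>E. e \<subseteq> F} \<inter> D = {}"
    unfolding D_def using insert.hyps(2) by blast+
  then have card_inner: "card {e\<in>E. e \<subseteq> insert x F} = card {e\<in>E. e \<subseteq> F} + card D"
    using fin_inner by (simp add: card_Un_disjoint)
  have card_S: "card (insert x F) = card F + 1"
    using insert.hyps by simp
  show ?case
  proof (cases "D = {}")
    case True
    text \<open>x has no neighbour in F (and no loop), so it extends I.\<close>
    have no_edge_at_x: "{x, u} \<notin> E" if "u \<in> insert x I" for u
      using that I(2) True unfolding D_def by blast
    have "independent_set V E (insert x I)"
      unfolding independent_set_def
    proof (intro conjI ballI)
      show "insert x I \<subseteq> V"
        using I(1) insert.prems unfolding independent_set_def by blast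
      fix u v assume u: "u \<in> insert x I" and v: "v \<in> insert x I"
      then consider "u = x" | "v = x" | "u \<in> I" "v \<in> I" by blast
      then show "{u, v} \<notin> E"
      proof cases
        case 1
        then show ?thesis using no_edge_at_x[OF v] by simp
      next
        case 2
        then show ?thesis using no_edge_at_x[OF u] by (simp add: insert_commute)
      next
        case 3
        then show ?thesis using I(1) unfolding independent_set_def by blast
      qed
    qed
    moreover have "x \<notin> I"
      using I(2) insert.hyps(2) by blast
    then have "card (insert x I) = card I + 1"
      using finite_subset[OF I(2) insert.hyps(1)] by simp
    then have "card (insert x F) \<le> card (insert x I) + card {e\<in>E. e \<subseteq> insert x F}"
      using I(3) card_inner card_S by linarith
    ultimately show ?thesis
      using I(2) by blast
  next
    case False
    text \<open>x lies on a new inner edge, which pays for the new vertex.\<close>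
    then have "card D \<ge> 1"
      using fin_inner(2) by (simp add: Suc_le_eq card_gt_0_iff)
    then have "card (insert x F) \<le> card I + card {e\<in>E. e \<subseteq> insert x F}"
      using I(3) card_inner card_S by linarith
    then show ?thesis
      using I(1,2) by blast
  qed
qed

lemma card_le_independence_number:
  assumes "finite V" "independent_set V E I"
  shows "card I \<le> independence_number V E"
proof -
  have "{card S | S. independent_set V E S} \<subseteq> {..card V}"
    using assms(1) card_mono unfolding independent_set_def by fastforce
  then have "finite {card S | S. independent_set V E S}"
    using finite_subset by blast
  then show ?thesis
    unfolding independence_number_def using assms(2) by (intro Max_ge) auto
qed

lemma independence_number_pos:
  assumes "simple_graph V E" "finite V" "V \<noteq> {}"
  shows "independence_number V E \<ge> 1"
proof -
  obtain v where "v \<in> V" using assms(3) by blast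
  then have "independent_set V E {v}"
    using simple_graph_no_loop[OF assms(1)] unfolding independent_set_def by auto
  then show ?thesis
    using card_le_independence_number[OF assms(2)] by fastforce
qed

lemma card_le_independence_number_plus_edges:
  assumes "finite V" "S \<subseteq> V"
  shows "card S \<le> independence_number V E + card {e\<in>E. e \<subseteq> S}"
proof -
  obtain I where "independent_set V E I" "card S \<le> card I + card {e\<in>E. e \<subseteq> S}"
    using independent_subset_greedy[OF finite_subset[OF assms(2,1)] assms(2)] by blast
  then show ?thesis
    using card_le_independence_number[OF assms(1)] by fastforce
qed

lemma count_eq_sum_indicator:
  assumes "finite I"
  shows "real (card {i\<in>I. \<omega> \<in> X i}) = (\<Sum>i\<in>I. indicator (X i) \<omega>)"
  using assms by (simp add: indicator_def sum.If_cases Int_def)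

lemma integrable_count:
  assumes "finite_measure M" "finite I" "\<And>i. i \<in> I \<Longrightarrow> X i \<in> sets M"
  shows "integrable M (\<lambda>\<omega>. real (card {i\<in>I. \<omega> \<in> X i}))"
  unfolding count_eq_sum_indicator[OF assms(2)]
  using assms by (intro Bochner_Integration.integrable_sum integrable_real_indicator)
    (auto simp: finite_measure.emeasure_finite less_top[symmetric])

lemma sum_measure_eq_integral_count:
  assumes "finite_measure M" "finite I" "\<And>i. i \<in> I \<Longrightarrow> X i \<in> sets M"
  shows "(\<Sum>i\<in>I. measure M (X i)) = (LINT \<omega>|M. real (card {i\<in>I. \<omega> \<in> X i}))"
  unfolding count_eq_sum_indicator[OF assms(2)]
  using assms by (subst Bochner_Integration.integral_sum)
    (auto simp: finite_measure.emeasure_finite less_top[symmetric]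
      intro: integrable_real_indicator)

lemma count_difference_le_indicator:
  assumes "finite V" "\<And>e. e \<in> E \<Longrightarrow> e \<subseteq> V"
  shows "real (card {v\<in>V. \<omega> \<in> A v}) - real (card {e\<in>E. \<omega> \<in> (\<Inter>v\<in>e. A v)})
           \<le> real (independence_number V E) * indicator (\<Union>v\<in>V. A v) \<omega>"
proof -
  define S where "S = {v\<in>V. \<omega> \<in> A v}"
  have edges_inside: "{e\<in>E. \<omega> \<in> (\<Inter>v\<in>e. A v)} = {e\<in>E. e \<subseteq> S}"
    using assms(2) unfolding S_def by blast
  show ?thesis
  proof (cases "S = {}")
    case True
    have "real (card S) - real (card {e\<in>E. \<omega> \<in> (\<Inter>v\<in>e. A v)}) \<le> 0"
      using True by simp
    moreover have "0 \<le> real (independence_number V E) * indicator (\<Union>v\<in>V. A v) \<omega>"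
      by simp
    ultimately show ?thesis
      unfolding S_def by linarith
  next
    case False
    then have "\<omega> \<in> (\<Union>v\<in>V. A v)"
      unfolding S_def by blast
    then have "indicator (\<Union>v\<in>V. A v) \<omega> = (1::real)"
      by simp
    moreover have "S \<subseteq> V"
      unfolding S_def by blast
    then have "card S \<le> independence_number V E + card {e\<in>E. e \<subseteq> S}"
      by (rule card_le_independence_number_plus_edges[OF assms(1)])
    ultimately show ?thesis
      unfolding S_def[symmetric] edges_inside by simp
  qed
qed

text \<open>The inequality for an arbitrary finite graph whose edges are nonempty subsets of V
  (nonemptiness makes the intersection over an edge an event), in product form.\<close>

lemma union_bound_independence_number:
  assumes "finite_measure M" "finite V"
    and edges: "\<And>e. e \<in> E \<Longrightarrow> e \<noteq> {} \<and> e \<subseteq> V"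
    and A: "\<And>v. v \<in> V \<Longrightarrow> A v \<in> sets M"
  shows "(\<Sum>v\<in>V. measure M (A v)) - (\<Sum>e\<in>E. measure M (\<Inter>v\<in>e. A v))
           \<le> real (independence_number V E) * measure M (\<Union>v\<in>V. A v)"
proof -
  let ?\<alpha> = "real (independence_number V E)"
  let ?countV = "\<lambda>\<omega>. real (card {v\<in>V. \<omega> \<in> A v})"
  let ?countE = "\<lambda>\<omega>. real (card {e\<in>E. \<omega> \<in> (\<Inter>v\<in>e. A v)})"
  have edge_subset: "\<And>e. e \<in> E \<Longrightarrow> e \<subseteq> V"
    using edges by blast
  then have "E \<subseteq> Pow V"
    by blast
  then have fin_E: "finite E"
    using assms(2) by (simp add: finite_subset)
  have edge_sets: "(\<Inter>v\<in>e. A v) \<in> sets M" if "e \<in> E" for e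
    using edges[OF that] finite_subset[OF _ assms(2)] A by (intro sets.finite_INT) auto
  have union_set: "(\<Union>v\<in>V. A v) \<in> sets M"
    using assms(2) A by (intro sets.finite_UN) auto
  have int_V: "integrable M ?countV"
    by (rule integrable_count[OF assms(1,2) A])
  have int_E: "integrable M ?countE"
    by (rule integrable_count[OF assms(1) fin_E edge_sets])
  have int_union: "integrable M (\<lambda>\<omega>. indicator (\<Union>v\<in>V. A v) \<omega> :: real)"
    using union_set by (intro integrable_real_indicator)
      (simp_all add: finite_measure.emeasure_finite[OF assms(1)] less_top[symmetric])
  have pointwise: "?countV \<omega> - ?countE \<omega> \<le> ?\<alpha> * indicator (\<Union>v\<in>V. A v) \<omega>" for \<omega>
    by (rule count_difference_le_indicator[OF assms(2) edge_subset])
  have "(\<Sum>v\<in>V. measure M (A v)) = (LINT \<omega>|M. ?countV \<omega>)"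
    by (rule sum_measure_eq_integral_count[OF assms(1,2) A])
  moreover have "(\<Sum>e\<in>E. measure M (\<Inter>v\<in>e. A v)) = (LINT \<omega>|M. ?countE \<omega>)"
    by (rule sum_measure_eq_integral_count[OF assms(1) fin_E edge_sets])
  ultimately have "(\<Sum>v\<in>V. measure M (A v)) - (\<Sum>e\<in>E. measure M (\<Inter>v\<in>e. A v))
      = (LINT \<omega>|M. ?countV \<omega> - ?countE \<omega>)"
    using Bochner_Integration.integral_diff[OF int_V int_E] by simp
  also have "\<dots> \<le> (LINT \<omega>|M. ?\<alpha> * indicator (\<Union>v\<in>V. A v) \<omega>)"
    using Bochner_Integration.integrable_diff[OF int_V int_E]
      integrable_mult_right[OF int_union] pointwise by (rule integral_mono)
  also have "\<dots> = ?\<alpha> * measure M (\<Union>v\<in>V. A v)"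
    using union_set assms(1) by (simp add: finite_measure.emeasure_finite less_top[symmetric])
  finally show ?thesis .
qed

theorem corollary1:
  fixes M :: "'b measure" and V :: "'a set" and E :: "'a set set" and A :: "'a \<Rightarrow> 'b set"
  assumes "prob_space M"
    and "finite V" and "V \<noteq> {}"
    and "is_tree V E"
    and "\<And>v. v \<in> V \<Longrightarrow> A v \<in> sets M"
  shows "measure M (\<Union>v\<in>V. A v) \<ge>
           (1 / real (independence_number V E)) *
           ((\<Sum>v\<in>V. measure M (A v)) - (\<Sum>e\<in>E. measure M (\<Inter>v\<in>e. A v)))"
proof -
  have graph: "simple_graph V E"
    using assms(4) unfolding is_tree_def by blast
  have "finite_measure M"
    using assms(1) by (simp add: prob_space_def)
  then have "(\<Sum>v\<in>V. measure M (A v)) - (\<Sum>e\<in>E. measure M (\<Inter>v\<in>e. A v))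
      \<le> real (independence_number V E) * measure M (\<Union>v\<in>V. A v)"
    by (rule union_bound_independence_number[OF _ assms(2) simple_graph_edge[OF graph] assms(5)])
  moreover have "independence_number V E \<ge> 1"
    using independence_number_pos[OF graph assms(2,3)] .
  ultimately show ?thesis
    by (simp add: divide_le_eq mult.commute)
qed

end
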